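(* Let $A=(a_1\ a_2\ a_3\ a_4)$ be a matrix of positive integers that admits a gluing of the first kind in the order $(a_1,a_2,a_3,a_4)$ (type $(((a_1\circ a_2)\circ a_3)\circ a_4)$). Let $M$ be a minimal Markov basis of $A$ consisting of $b=(b_1,-b_2,0,0)$, $c=(c_1,c_2,-c_3,0)$, $d=(d_1,d_2,d_3,-d_4)$, where $b_1,b_2,c_3,d_4>0$ and $c_1,c_2,d_1,d_2,d_3\ge0$ are integers, and assume $b_1>b_2$. Then $M$ is distance reducing if and only if all of the following hold: (a) $c_1<c_2+c_3$; (b) ($c_1=0$ and $c_3<c_2$) or $d_1+d_3<d_2+d_4$; (c) $c_1+c_2<c_3$ or $d_1+d_2<d_3+d_4$.
   Context: $A$ admits a gluing of the first kind in the order $(a_1,\dots,a_4)$ if for each $k\in\{1,2,3\}$ there exists $x\in\mathbb N\{a_1,\dots,a_k\}\cap a_{k+1}\mathbb N$ with $x\mathbb Z=\mathbb Z\{a_1,\dots,a_k\}\cap a_{k+1}\mathbb Z$. For $z\in\mathbb Z^n$, $z^\pm\in\mathbb N^n$ are the unique vectors with disjoint supports and $z=z^+-z^-$; $\|\cdot\|$ is the $1$-norm. A Markov basis is a set $B\subseteq\ker(A)$ whose binomials $x^{u^+}-x^{u^-}$ generate the toric ideal $I_A$; minimal means no proper subset is one. For nonzero $z\in\ker(A)$, $u$ reduces the distance of $z$ if there exist $(p,q)\in\{(z^+,z^-),(z^-,z^+)\}$ and $\varepsilon\in\{\pm1\}$ with $p+\varepsilon u\in\mathbb N^n$ and $\|p+\varepsilon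 u-q\|<\|z\|$; $B$ is distance reducing if every nonzero $z\in\ker(A)$ has its distance reduced by some element of $B$. *)

theory Defs
  imports Main "HOL-Library.Poly_Mapping"
begin

text \<open>Vectors in Z^n are functions nat => int supported on the index set {1..n}
  (indices as in the paper, starting from 1).  A = (a_1 ... a_n) is a function a :: nat => int.\<close>

definition intvecs :: "nat \<Rightarrow> (nat \<Rightarrow> int) set" where
  "intvecs n = {z. \<forall>i. i \<notin> {1..n} \<longrightarrow> z i = 0}"

definition kerA :: "(nat \<Rightarrow> int) \<Rightarrow> nat \<Rightarrow> (nat \<Rightarrow> int) set" where
  "kerA a n = {z \<in> intvecs n. (\<Sum>i=1..n. a i * z i) = 0}"

definition vplus :: "(nat \<Rightarrow> int) \<Rightarrow> (nat \<Rightarrow> int)" where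
  "vplus z = (\<lambda>i. max (z i) 0)"

definition vminus :: "(nat \<Rightarrow> int) \<Rightarrow> (nat \<Rightarrow> int)" where
  "vminus z = (\<lambda>i. max (- z i) 0)"

definition norm1 :: "nat \<Rightarrow> (nat \<Rightarrow> int) \<Rightarrow> int" where
  "norm1 n z = (\<Sum>i=1..n. \<bar>z i\<bar>)"

definition nat_comb :: "(nat \<Rightarrow> int) \<Rightarrow> nat \<Rightarrow> int set" where
  "nat_comb a k = {x. \<exists>l :: nat \<Rightarrow> nat. x = (\<Sum>i=1..k. int (l i) * a i)}"

definition int_comb :: "(nat \<Rightarrow> int) \<Rightarrow> nat \<Rightarrow> int set" where
  "int_comb a k = {x. \<exists>l :: nat \<Rightarrow> int. x = (\<Sum>i=1..k. l i * a i)}"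

definition gluing_first_kind :: "(nat \<Rightarrow> int) \<Rightarrow> nat \<Rightarrow> bool" where
  "gluing_first_kind a n \<longleftrightarrow>
     (\<forall>k\<in>{1..<n}. \<exists>x. x \<in> nat_comb a k \<and> x \<in> {a (Suc k) * int m | m. True} \<and>
        {x * m | m :: int. True} = int_comb a k \<inter> {a (Suc k) * m | m :: int. True})"

definition monom :: "nat \<Rightarrow> (nat \<Rightarrow> nat) \<Rightarrow> ((nat \<Rightarrow>\<^sub>0 nat) \<Rightarrow>\<^sub>0 'k::field)" where
  "monom n u = Poly_Mapping.single (\<Sum>i=1..n. Poly_Mapping.single i (u i)) 1"

definition binom :: "nat \<Rightarrow> (nat \<Rightarrow> int) \<Rightarrow> ((nat \<Rightarrow>\<^sub>0 nat) \<Rightarrow>\<^sub>0 'k::field)" where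
  "binom n z = monom n (\<lambda>i. nat (vplus z i)) - monom n (\<lambda>i. nat (vminus z i))"

definition ideal_gen :: "'r::comm_ring_1 set \<Rightarrow> 'r set" where
  "ideal_gen G = {(\<Sum>g\<in>t. r g * g) | t r. finite t \<and> t \<subseteq> G}"

definition toric_ideal :: "'k itself \<Rightarrow> (nat \<Rightarrow> int) \<Rightarrow> nat \<Rightarrow> ((nat \<Rightarrow>\<^sub>0 nat) \<Rightarrow>\<^sub>0 'k::field) set" where
  "toric_ideal _ a n = ideal_gen {monom n u - monom n v | u v.
      (\<Sum>i=1..n. a i * int (u i)) = (\<Sum>i=1..n. a i * int (v i))}"

definition markov_basis :: "'k::field itself \<Rightarrow> (nat \<Rightarrow> int) \<Rightarrow> nat \<Rightarrow> (nat \<Rightarrow> int) set \<Rightarrow> bool" where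
  "markov_basis K a n B \<longleftrightarrow> B \<subseteq> kerA a n \<and>
     ideal_gen ((binom n :: _ \<Rightarrow> ((nat \<Rightarrow>\<^sub>0 nat) \<Rightarrow>\<^sub>0 'k)) ` B) = toric_ideal K a n"

definition minimal_markov_basis :: "'k::field itself \<Rightarrow> (nat \<Rightarrow> int) \<Rightarrow> nat \<Rightarrow> (nat \<Rightarrow> int) set \<Rightarrow> bool" where
  "minimal_markov_basis K a n B \<longleftrightarrow> markov_basis K a n B \<and> (\<forall>B'. B' \<subset> B \<longrightarrow> \<not> markov_basis K a n B')"

definition reduces_distance :: "nat \<Rightarrow> (nat \<Rightarrow> int) \<Rightarrow> (nat \<Rightarrow> int) \<Rightarrow> bool" where
  "reduces_distance n u z \<longleftrightarrow>
     (\<exists>(p, q) \<in> {(vplus z, vminus z), (vminus z, vplus z)}. \<exists>e \<in> {1, -1 :: int}.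
        (\<forall>i\<in>{1..n}. p i + e * u i \<ge> 0) \<and>
        norm1 n (\<lambda>i. p i + e * u i - q i) < norm1 n z)"

definition distance_reducing :: "(nat \<Rightarrow> int) \<Rightarrow> nat \<Rightarrow> (nat \<Rightarrow> int) set \<Rightarrow> bool" where
  "distance_reducing a n B \<longleftrightarrow>
     (\<forall>z \<in> kerA a n. z \<noteq> (\<lambda>_. 0) \<longrightarrow> (\<exists>u\<in>B. reduces_distance n u z))"

definition vec4 :: "int \<Rightarrow> int \<Rightarrow> int \<Rightarrow> int \<Rightarrow> (nat \<Rightarrow> int)" where
  "vec4 x1 x2 x3 x4 = (\<lambda>i. if i = 1 then x1 else if i = 2 then x2 else if i = 3 then x3
                          else if i = 4 then x4 else 0)"

end

(*
  Summing the coefficients of a polynomial over one coset of the lattice L spanned by a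
  Markov basis B is a linear functional that kills every multiple of a binomial of B; hence it
  kills the toric ideal, so for z in ker A the monomials x^(z+) and x^(z-) lie in the same coset,
  i.e. ker A = L.  For B = {b, c, d} the kernel therefore consists of the points i b + j c + k d,
  and since z and -z are reduced by the same moves we may take (k, j, i) lexicographically
  positive.  A case distinction on the signs of i, j, k shows that, under (a)-(c), one of
  +-b, +-c, +-d always shortens z while keeping one of its two monomials nonnegative.
  Conversely, if one of (a)-(c) fails, an explicit lattice point with vanishing first coordinate
  and large second or third coordinate is shortened by none of them.
*)
theory Submission
  imports Defs "HOL-Library.Function_Algebras" "HOL-Computational_Algebra.Group_Closure"
begin

section \<open>Markov bases span the kernel lattice\<close>

definition coeffs_sum :: "('a \<Rightarrow>\<^sub>0 nat) set \<Rightarrow> (('a \<Rightarrow>\<^sub>0 nat) \<Rightarrow>\<^sub>0 'k::comm_ring_1) \<Rightarrow> 'k" where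
  "coeffs_sum C p = (\<Sum>m\<in>Poly_Mapping.keys p. if m \<in> C then Poly_Mapping.lookup p m else 0)"

lemma coeffs_sum_add: "coeffs_sum C (p + q) = coeffs_sum C p + coeffs_sum C q"
  unfolding coeffs_sum_def by (rule setsum_keys_plus_distrib) auto

lemma coeffs_sum_zero [simp]: "coeffs_sum C 0 = 0"
  by (simp add: coeffs_sum_def)

lemma coeffs_sum_diff: "coeffs_sum C (p - q) = coeffs_sum C p - coeffs_sum C q"
  using coeffs_sum_add [of C "p - q" q] by simp

lemma coeffs_sum_sum: "coeffs_sum C (\<Sum>x\<in>X. f x) = (\<Sum>x\<in>X. coeffs_sum C (f x))"
  by (induction X rule: infinite_finite_induct) (simp_all add: coeffs_sum_add)

lemma coeffs_sum_single [simp]: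
  "coeffs_sum C (Poly_Mapping.single m c) = (if m \<in> C then c else 0)"
  by (cases "c = 0") (simp_all add: coeffs_sum_def)

lemma sum_single_lookup:
  "(\<Sum>m\<in>Poly_Mapping.keys p. Poly_Mapping.single m (Poly_Mapping.lookup p m)) = p"
  by (rule poly_mapping_eqI) (simp add: lookup_sum lookup_single when_def in_keys_iff)

lemma coeffs_sum_mult_binomial:
  assumes "\<And>s. s + m \<in> C \<longleftrightarrow> s + m' \<in> C"
  shows "coeffs_sum C (r * (Poly_Mapping.single m 1 - Poly_Mapping.single m' 1)) = 0"
proof -
  have "r * (Poly_Mapping.single m 1 - Poly_Mapping.single m' 1) =
      (\<Sum>s\<in>Poly_Mapping.keys r. Poly_Mapping.single (s + m) (Poly_Mapping.lookup r s)
         - Poly_Mapping.single (s + m') (Poly_Mapping.lookup r s))"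
    by (subst (1) sum_single_lookup [of r, symmetric])
      (simp add: sum_distrib_right right_diff_distrib mult_single sum_subtractf)
  then show ?thesis
    by (simp add: coeffs_sum_sum coeffs_sum_diff assms)
qed

lemma coeffs_sum_ideal_gen:
  assumes "\<And>g. g \<in> G \<Longrightarrow> \<exists>m m'. g = Poly_Mapping.single m 1 - Poly_Mapping.single m' 1 \<and>
      (\<forall>s. s + m \<in> C \<longleftrightarrow> s + m' \<in> C)"
    and "p \<in> ideal_gen G"
  shows "coeffs_sum C p = 0"
proof -
  obtain T r where "p = (\<Sum>g\<in>T. r g * g)" and "T \<subseteq> G"
    using assms(2) unfolding ideal_gen_def by blast
  moreover have "coeffs_sum C (r g * g) = 0" if "g \<in> G" for g
    using assms(1) [OF that] coeffs_sum_mult_binomial by blast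
  ultimately show ?thesis
    by (simp add: coeffs_sum_sum subset_iff)
qed

lemma generator_in_ideal_gen: "g \<in> G \<Longrightarrow> g \<in> ideal_gen G"
  unfolding ideal_gen_def by (intro CollectI exI [of _ "{g}"] exI [of _ "\<lambda>_. 1"]) simp

definition exponent_vec :: "('a \<Rightarrow>\<^sub>0 nat) \<Rightarrow> 'a \<Rightarrow> int" where
  "exponent_vec m = (\<lambda>i. int (Poly_Mapping.lookup m i))"

lemma exponent_vec_add: "exponent_vec (m + m') = exponent_vec m + exponent_vec m'"
  by (simp add: exponent_vec_def lookup_add fun_eq_iff)

lemma lookup_sum_single:
  "Poly_Mapping.lookup (\<Sum>i=1..(n::nat). Poly_Mapping.single i (w i)) t =
     (if t \<in> {1..n} then w t else 0)"
proof -
  have "Poly_Mapping.lookup (\<Sum>i=1..n. Poly_Mapping.single i (w i)) t =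
      (\<Sum>i\<in>{1..n}. if i = t then w i else 0)"
    unfolding lookup_sum lookup_single when_def by (rule sum.cong) auto
  also have "\<dots> = (if t \<in> {1..n} then w t else 0)"
    by (rule sum.delta) simp
  finally show ?thesis .
qed

lemma exponent_vec_vplus_vminus:
  assumes "z \<in> intvecs n"
  shows "exponent_vec (\<Sum>i=1..n. Poly_Mapping.single i (nat (vplus z i))) =
      exponent_vec (\<Sum>i=1..n. Poly_Mapping.single i (nat (vminus z i))) + z"
  using assms unfolding exponent_vec_def lookup_sum_single
  by (auto simp: vplus_def vminus_def intvecs_def fun_eq_iff)

lemma binom_in_toric_ideal:
  assumes "z \<in> kerA a n"
  shows "binom n z \<in> toric_ideal TYPE('k::field) a n"
proof -
  have "(\<Sum>i=1..n. a i * int (nat (vplus z i))) - (\<Sum>i=1..n. a i * int (nat (vminus z i)))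
      = (\<Sum>i=1..n. a i * z i)"
    unfolding sum_subtractf [symmetric]
    by (rule sum.cong) (auto simp: vplus_def vminus_def max_def algebra_simps)
  also have "\<dots> = 0"
    using assms by (simp add: kerA_def)
  finally show ?thesis
    unfolding toric_ideal_def binom_def by (intro generator_in_ideal_gen) force
qed

lemma kerA_diff: "u \<in> kerA a n \<Longrightarrow> v \<in> kerA a n \<Longrightarrow> u - v \<in> kerA a n"
  by (simp add: kerA_def intvecs_def right_diff_distrib sum_subtractf)

lemma group_closure_subset_kerA: "B \<subseteq> kerA a n \<Longrightarrow> group_closure B \<subseteq> kerA a n"
proof
  fix z assume "z \<in> group_closure B" "B \<subseteq> kerA a n"
  then show "z \<in> kerA a n"
  proof (induction rule: group_closure.induct)
    case (base s)
    then show ?case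
      by (auto simp: kerA_def intvecs_def)
  next
    case (diff s t)
    then show ?case
      using kerA_diff [of s a n t] by (simp add: fun_diff_def)
  qed
qed

lemma group_closure_add_right_iff:
  assumes "u \<in> group_closure S"
  shows "x + u \<in> group_closure S \<longleftrightarrow> x \<in> group_closure S"
proof
  assume "x + u \<in> group_closure S"
  from group_closure.diff [OF this assms] show "x \<in> group_closure S"
    by simp
qed (rule group_closure_add [OF _ assms])

lemma markov_basis_kerA_subset:
  assumes "markov_basis TYPE('k::field) a n B"
  shows "kerA a n \<subseteq> group_closure B"
proof
  fix z assume z: "z \<in> kerA a n"
  have B: "B \<subseteq> intvecs n" and ideal: "ideal_gen (binom n ` B) = toric_ideal TYPE('k) a n"
    using assms by (auto simp: markov_basis_def kerA_def)
  define P where "P u = (\<Sum>i=1..n. Poly_Mapping.single i (nat (vplus u i)))" for u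
  define N where "N u = (\<Sum>i=1..n. Poly_Mapping.single i (nat (vminus u i)))" for u
  define C where "C = {m. exponent_vec m - exponent_vec (P z) \<in> group_closure B}"
  have binom_P_N: "binom n u = Poly_Mapping.single (P u) 1 - Poly_Mapping.single (N u) 1" for u
    by (simp add: binom_def monom_def P_def N_def)
  have binom_shift: "\<exists>m m'. g = Poly_Mapping.single m 1 - Poly_Mapping.single m' 1 \<and>
      (\<forall>s. s + m \<in> C \<longleftrightarrow> s + m' \<in> C)"
    if g: "g \<in> (binom n ` B :: ((nat \<Rightarrow>\<^sub>0 nat) \<Rightarrow>\<^sub>0 'k) set)" for g
  proof -
    obtain u where u: "u \<in> B" and g_u: "g = binom n u"
      using g by blast
    have "exponent_vec (P u) = exponent_vec (N u) + u"
      using exponent_vec_vplus_vminus [of u n] u B unfolding P_def N_def by blast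
    then have shift: "exponent_vec (s + P u) - exponent_vec (P z) =
        (exponent_vec (s + N u) - exponent_vec (P z)) + u" for s
      by (simp add: exponent_vec_add algebra_simps)
    have "u \<in> group_closure B"
      using u by (simp add: group_closure.base)
    then have "s + P u \<in> C \<longleftrightarrow> s + N u \<in> C" for s
      by (simp only: C_def mem_Collect_eq shift group_closure_add_right_iff)
    then show ?thesis
      unfolding g_u binom_P_N by blast
  qed
  have "coeffs_sum C (binom n z :: (nat \<Rightarrow>\<^sub>0 nat) \<Rightarrow>\<^sub>0 'k) = 0"
    using coeffs_sum_ideal_gen binom_shift binom_in_toric_ideal [OF z] ideal by blast
  then have "N z \<in> C"
    by (simp add: binom_P_N coeffs_sum_diff C_def split: if_splits)
  moreover have "exponent_vec (P z) = exponent_vec (N z) + z"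
    using exponent_vec_vplus_vminus [of z n] z unfolding P_def N_def kerA_def by blast
  ultimately have "- z \<in> group_closure B"
    by (simp add: C_def)
  then show "z \<in> group_closure B"
    by simp
qed

lemma markov_basis_kerA_eq:
  assumes "markov_basis TYPE('k::field) a n B"
  shows "kerA a n = group_closure B"
  using markov_basis_kerA_subset [OF assms] group_closure_subset_kerA [of B a n] assms
  by (auto simp: markov_basis_def)

lemma group_closure_int_mult:
  fixes u :: "'a \<Rightarrow> int"
  assumes "u \<in> group_closure S"
  shows "(\<lambda>t. i * u t) \<in> group_closure S"
proof -
  have "(\<lambda>t. int n * u t) \<in> group_closure S" for n
  proof (induction n)
    case 0
    then show ?case
      by (simp add: zero_fun_def [symmetric])
  next
    case (Suc n)
    then have "(\<lambda>t. int n * u t) + u \<in> group_closure S"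
      using assms by (rule group_closure_add)
    then show ?case
      by (simp add: plus_fun_def algebra_simps)
  qed
  from this [of "nat \<bar>i\<bar>"] show ?thesis
    using group_closure_minus_iff [of "\<lambda>t. int (nat \<bar>i\<bar>) * u t" S]
    by (cases "i \<ge> 0") (simp_all add: fun_Compl_def)
qed

lemma group_closure_three_eq:
  fixes u v w :: "'a \<Rightarrow> int"
  shows "group_closure {u, v, w} = {\<lambda>t. i * u t + j * v t + k * w t | i j k. True}"
proof
  show "group_closure {u, v, w} \<subseteq> {\<lambda>t. i * u t + j * v t + k * w t | i j k. True}"
  proof
    fix z assume "z \<in> group_closure {u, v, w}"
    then show "z \<in> {\<lambda>t. i * u t + j * v t + k * w t | i j k. True}"
    proof (induction rule: group_closure.induct)
      case (base s)
      have "0 = (\<lambda>t. 0 * u t + 0 * v t + 0 * w t)" "u = (\<lambda>t. 1 * u t + 0 * v t + 0 * w t)"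
        "v = (\<lambda>t. 0 * u t + 1 * v t + 0 * w t)" "w = (\<lambda>t. 0 * u t + 0 * v t + 1 * w t)"
        by (simp_all add: zero_fun_def)
      then show ?case
        using base by blast
    next
      case (diff s s')
      then obtain i j k i' j' k' where "s = (\<lambda>t. i * u t + j * v t + k * w t)"
        and "s' = (\<lambda>t. i' * u t + j' * v t + k' * w t)"
        by blast
      then have "s - s' = (\<lambda>t. (i - i') * u t + (j - j') * v t + (k - k') * w t)"
        by (simp add: fun_eq_iff algebra_simps)
      then show ?case
        by blast
    qed
  qed
next
  have "(\<lambda>t. i * u t) + (\<lambda>t. j * v t) + (\<lambda>t. k * w t) \<in> group_closure {u, v, w}" for i j k
    by (intro group_closure_add group_closure_int_mult) (simp_all add: group_closure.base)
  then show "{\<lambda>t. i * u t + j * v t + k * w t | i j k. True} \<subseteq> group_closure {u, v, w}"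
    by (auto simp: plus_fun_def)
qed

section \<open>Distance reduction as an improving step\<close>

(* In reduces_distance, (p, q) = (z+, z-) with e u = w, or (p, q) = (z-, z+) with e u = -w,
   turns z into z + w, resp. -(z + w). *)

definition improves :: "nat \<Rightarrow> (nat \<Rightarrow> int) \<Rightarrow> (nat \<Rightarrow> int) \<Rightarrow> bool" where
  "improves n w z \<longleftrightarrow> norm1 n (z + w) < norm1 n z \<and>
     ((\<forall>i\<in>{1..n}. 0 \<le> vplus z i + w i) \<or> (\<forall>i\<in>{1..n}. 0 \<le> vminus z i - w i))"

lemma norm1_uminus [simp]: "norm1 n (- z) = norm1 n z"
  by (simp add: norm1_def)

lemma reduces_distance_iff_improves:
  "reduces_distance n u z \<longleftrightarrow> improves n u z \<or> improves n (- u) z"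
proof -
  have vplus_vminus: "vplus z i - vminus z i = z i" for i
    by (simp add: vplus_def vminus_def max_def)
  have plus: "(\<lambda>i. vplus z i + e * u i - vminus z i) = z + (\<lambda>i. e * u i)"
    and minus: "(\<lambda>i. vminus z i + e * u i - vplus z i) = - (z + (\<lambda>i. - e * u i))" for e
    using vplus_vminus by (auto simp: fun_eq_iff algebra_simps)
  have "reduces_distance n u z \<longleftrightarrow>
      (\<exists>e\<in>{1, -1}. norm1 n (z + (\<lambda>i. e * u i)) < norm1 n z \<and>
         (\<forall>i\<in>{1..n}. 0 \<le> vplus z i + e * u i)) \<or>
      (\<exists>e\<in>{1, -1}. norm1 n (z + (\<lambda>i. - e * u i)) < norm1 n z \<and>
         (\<forall>i\<in>{1..n}. 0 \<le> vminus z i + e * u i))"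
    unfolding reduces_distance_def bex_simps(3,5) case_prod_conv plus minus norm1_uminus by blast
  also have "\<dots> \<longleftrightarrow> improves n u z \<or> improves n (- u) z"
    by (auto simp: improves_def fun_Compl_def)
  finally show ?thesis .
qed

lemma improves_uminus: "improves n w (- z) \<longleftrightarrow> improves n (- w) z"
proof -
  have "vplus (- z) = vminus z" "vminus (- z) = vplus z"
    by (simp_all add: vplus_def vminus_def fun_eq_iff)
  moreover have "norm1 n (- z + w) = norm1 n (z + - w)"
    using norm1_uminus [of n "z + - w"] by (simp add: add.commute)
  ultimately show ?thesis
    by (auto simp: improves_def)
qed

lemma reduces_distance_uminus: "reduces_distance n u (- z) \<longleftrightarrow> reduces_distance n u z"
  by (auto simp: reduces_distance_iff_improves improves_uminus)

lemma vec4_uminus [simp]: "- vec4 x1 x2 x3 x4 = vec4 (- x1) (- x2) (- x3) (- x4)"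
  by (simp add: vec4_def fun_eq_iff)

lemma vec4_eq_zero_iff: "vec4 x1 x2 x3 x4 = 0 \<longleftrightarrow> x1 = 0 \<and> x2 = 0 \<and> x3 = 0 \<and> x4 = 0"
proof
  assume "vec4 x1 x2 x3 x4 = 0"
  then have "vec4 x1 x2 x3 x4 i = 0" for i
    by simp
  from this [of 1] this [of 2] this [of 3] this [of 4] show "x1 = 0 \<and> x2 = 0 \<and> x3 = 0 \<and> x4 = 0"
    by (simp add: vec4_def)
qed (simp add: vec4_def fun_eq_iff)

lemma atLeastAtMost_1_4: "{1..4::nat} = {1, 2, 3, 4}"
  by auto

lemma improves_vec4:
  "improves 4 (vec4 w1 w2 w3 w4) (vec4 z1 z2 z3 z4) \<longleftrightarrow>
     \<bar>z1 + w1\<bar> + \<bar>z2 + w2\<bar> + \<bar>z3 + w3\<bar> + \<bar>z4 + w4\<bar> < \<bar>z1\<bar> + \<bar>z2\<bar> + \<bar>z3\<bar> + \<bar>z4\<bar> \<and>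
     ((0 \<le> max z1 0 + w1 \<and> 0 \<le> max z2 0 + w2 \<and> 0 \<le> max z3 0 + w3 \<and> 0 \<le> max z4 0 + w4) \<or>
      (w1 \<le> max (- z1) 0 \<and> w2 \<le> max (- z2) 0 \<and> w3 \<le> max (- z3) 0 \<and> w4 \<le> max (- z4) 0))"
  unfolding improves_def norm1_def atLeastAtMost_1_4
  by (simp add: vplus_def vminus_def vec4_def add.assoc)

section \<open>Markov bases with a triangular sign pattern\<close>

(* The positivity of c1 + c2 and d1 + d2 + d3 comes from c and d lying in the kernel of a
   positive matrix. *)
locale triangular_moves =
  fixes b1 b2 c1 c2 c3 d1 d2 d3 d4 :: int
  assumes b_pos: "0 < b2" "b2 < b1"
    and c_pos: "0 < c3" "0 \<le> c1" "0 \<le> c2" "0 < c1 + c2"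
    and d_pos: "0 < d4" "0 \<le> d1" "0 \<le> d2" "0 \<le> d3" "0 < d1 + d2 + d3"
begin

definition moves :: "(nat \<Rightarrow> int) set" where
  "moves = {vec4 b1 (- b2) 0 0, vec4 c1 c2 (- c3) 0, vec4 d1 d2 d3 (- d4)}"

definition reducible :: "(nat \<Rightarrow> int) \<Rightarrow> bool" where
  "reducible z \<longleftrightarrow> (\<exists>u\<in>moves. reduces_distance 4 u z)"

definition lincomb :: "int \<Rightarrow> int \<Rightarrow> int \<Rightarrow> nat \<Rightarrow> int" where
  "lincomb i j k =
     vec4 (i * b1 + j * c1 + k * d1) (j * c2 + k * d2 - i * b2) (k * d3 - j * c3) (- (k * d4))"

lemma lincomb_eq:
  "(\<lambda>t. i * vec4 b1 (- b2) 0 0 t + j * vec4 c1 c2 (- c3) 0 t + k * vec4 d1 d2 d3 (- d4) t) =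
     lincomb i j k"
  by (auto simp: lincomb_def vec4_def fun_eq_iff algebra_simps)

lemma group_closure_moves: "group_closure moves = {lincomb i j k | i j k. True}"
  unfolding moves_def group_closure_three_eq lincomb_eq ..

lemma lincomb_uminus: "lincomb (- i) (- j) (- k) = - lincomb i j k"
  by (simp add: lincomb_def algebra_simps)

lemma lincomb_zero [simp]: "lincomb 0 0 0 = 0"
  by (simp add: lincomb_def vec4_eq_zero_iff)

lemma reducible_uminus: "reducible (- z) \<longleftrightarrow> reducible z"
  by (simp add: reducible_def reduces_distance_uminus)

lemma reducible_vec4_iff:
  "reducible (vec4 z1 z2 z3 z4) \<longleftrightarrow>
     improves 4 (vec4 b1 (- b2) 0 0) (vec4 z1 z2 z3 z4) \<or>
     improves 4 (vec4 (- b1) b2 0 0) (vec4 z1 z2 z3 z4) \<or>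
     improves 4 (vec4 c1 c2 (- c3) 0) (vec4 z1 z2 z3 z4) \<or>
     improves 4 (vec4 (- c1) (- c2) c3 0) (vec4 z1 z2 z3 z4) \<or>
     improves 4 (vec4 d1 d2 d3 (- d4)) (vec4 z1 z2 z3 z4) \<or>
     improves 4 (vec4 (- d1) (- d2) (- d3) d4) (vec4 z1 z2 z3 z4)"
  by (simp add: reducible_def moves_def reduces_distance_iff_improves)

lemma improves_minus_b: "b1 \<le> z1 \<Longrightarrow> improves 4 (vec4 (- b1) b2 0 0) (vec4 z1 z2 z3 z4)"
  using b_pos by (simp add: improves_vec4 le_max_iff_disj abs_if)

lemma improves_minus_c_z2:
  "c1 = 0 \<Longrightarrow> c3 < c2 \<Longrightarrow> c2 \<le> z2 \<Longrightarrow> improves 4 (vec4 (- c1) (- c2) c3 0) (vec4 z1 z2 z3 z4)"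
  using c_pos by (simp add: improves_vec4 le_max_iff_disj abs_if)

lemma improves_minus_c_z23:
  "c2 \<le> z2 \<Longrightarrow> z3 \<le> - c3 \<Longrightarrow> c1 < c2 + c3 \<Longrightarrow>
     improves 4 (vec4 (- c1) (- c2) c3 0) (vec4 z1 z2 z3 z4)"
  using c_pos by (simp add: improves_vec4 le_max_iff_disj abs_if)

lemma improves_c_z3: "c3 \<le> z3 \<Longrightarrow> c1 + c2 < c3 \<Longrightarrow> improves 4 (vec4 c1 c2 (- c3) 0) (vec4 z1 z2 z3 z4)"
  using c_pos by (simp add: improves_vec4 le_max_iff_disj abs_if)

lemma improves_minus_d_z2:
  "d2 \<le> z2 \<Longrightarrow> z4 \<le> - d4 \<Longrightarrow> d1 + d3 < d2 + d4 \<Longrightarrow>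
     improves 4 (vec4 (- d1) (- d2) (- d3) d4) (vec4 z1 z2 z3 z4)"
  using d_pos by (simp add: improves_vec4 le_max_iff_disj abs_if)

lemma improves_minus_d_z3:
  "d3 \<le> z3 \<Longrightarrow> z4 \<le> - d4 \<Longrightarrow> d1 + d2 < d3 + d4 \<Longrightarrow>
     improves 4 (vec4 (- d1) (- d2) (- d3) d4) (vec4 z1 z2 z3 z4)"
  using d_pos by (simp add: improves_vec4 le_max_iff_disj abs_if)

lemma improves_minus_d_z23:
  "d2 \<le> z2 \<Longrightarrow> d3 \<le> z3 \<Longrightarrow> z4 \<le> - d4 \<Longrightarrow> d1 < d2 + d3 + d4 \<Longrightarrow>
     improves 4 (vec4 (- d1) (- d2) (- d3) d4) (vec4 z1 z2 z3 z4)"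
  using d_pos by (simp add: improves_vec4 le_max_iff_disj abs_if)

lemma reducible_lincomb_i_pos:
  assumes "1 \<le> i" "0 \<le> j" "0 \<le> k"
  shows "reducible (lincomb i j k)"
proof -
  have "b1 \<le> i * b1 + j * c1 + k * d1"
    using assms b_pos c_pos d_pos by (simp add: mult_le_cancel_right1 add_increasing2)
  from improves_minus_b [OF this] show ?thesis
    unfolding lincomb_def reducible_vec4_iff by blast
qed

lemma reducible_lincomb_j_k_pos:
  assumes "c1 = 0 \<and> c3 < c2 \<or> d1 + d3 < d2 + d4" "1 \<le> k" "1 \<le> j" "i \<le> 0"
  shows "reducible (lincomb i j k)"
proof -
  have "c2 \<le> j * c2" "d2 \<le> k * d2" "i * b2 \<le> 0" "d4 \<le> k * d4"
    using assms b_pos c_pos d_pos by (simp_all add: mult_le_cancel_right1 mult_nonpos_nonneg)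
  then have "c2 \<le> j * c2 + k * d2 - i * b2" "d2 \<le> j * c2 + k * d2 - i * b2" "- (k * d4) \<le> - d4"
    using c_pos d_pos by linarith+
  then show ?thesis
    using assms(1) improves_minus_d_z2 improves_minus_c_z2
    unfolding lincomb_def reducible_vec4_iff by blast
qed

lemma reducible_lincomb_k_pos_j_zero:
  assumes "c1 = 0 \<and> c3 < c2 \<or> d1 + d3 < d2 + d4" "c1 + c2 < c3 \<or> d1 + d2 < d3 + d4"
    and "1 \<le> k" "i \<le> 0"
  shows "reducible (lincomb i 0 k)"
proof -
  have "d2 \<le> k * d2" "d3 \<le> k * d3" "i * b2 \<le> 0" "d4 \<le> k * d4"
    using assms b_pos d_pos by (simp_all add: mult_le_cancel_right1 mult_nonpos_nonneg)
  then have "d2 \<le> k * d2 - i * b2" "d3 \<le> k * d3" "- (k * d4) \<le> - d4" "d1 < d2 + d3 + d4"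
    using assms(1,2) c_pos d_pos by linarith+
  from improves_minus_d_z23 [OF this] show ?thesis
    unfolding lincomb_def reducible_vec4_iff by simp
qed

lemma reducible_lincomb_k_pos_j_neg:
  assumes "c1 + c2 < c3 \<or> d1 + d2 < d3 + d4" "1 \<le> k" "j \<le> -1"
  shows "reducible (lincomb i j k)"
proof -
  have "c3 \<le> (- j) * c3" "d3 \<le> k * d3" "d4 \<le> k * d4"
    using assms c_pos d_pos mult_le_cancel_right1 [of c3 "- j"]
    by (simp_all add: mult_le_cancel_right1)
  then have "c3 \<le> k * d3 - j * c3" "d3 \<le> k * d3 - j * c3" "- (k * d4) \<le> - d4"
    using c_pos d_pos by linarith+
  then show ?thesis
    using assms(1) improves_minus_d_z3 improves_c_z3
    unfolding lincomb_def reducible_vec4_iff by blast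
qed

lemma reducible_lincomb_k_zero_j_pos:
  assumes "c1 < c2 + c3" "1 \<le> j" "i \<le> 0"
  shows "reducible (lincomb i j 0)"
proof -
  have "c2 \<le> j * c2" "c3 \<le> j * c3" "i * b2 \<le> 0"
    using assms b_pos c_pos by (simp_all add: mult_le_cancel_right1 mult_nonpos_nonneg)
  then have "c2 \<le> j * c2 - i * b2" "- (j * c3) \<le> - c3"
    by linarith+
  from improves_minus_c_z23 [OF this assms(1)] show ?thesis
    unfolding lincomb_def reducible_vec4_iff by simp
qed

lemma reducible_lincomb:
  assumes "c1 < c2 + c3" "c1 = 0 \<and> c3 < c2 \<or> d1 + d3 < d2 + d4"
    and "c1 + c2 < c3 \<or> d1 + d2 < d3 + d4" "lincomb i j k \<noteq> 0"
  shows "reducible (lincomb i j k)"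
proof -
  have lex_pos: "reducible (lincomb i j k)"
    if pos: "0 < k \<or> k = 0 \<and> 0 < j \<or> k = 0 \<and> j = 0 \<and> 0 < i" for i j k
  proof -
    consider "1 \<le> i" "0 \<le> j" "0 \<le> k" | "1 \<le> k" "1 \<le> j" "i \<le> 0" | "1 \<le> k" "j = 0" "i \<le> 0"
      | "1 \<le> k" "j \<le> -1" | "k = 0" "1 \<le> j" "i \<le> 0"
      using pos by linarith
    then show ?thesis
      using assms(1-3) reducible_lincomb_i_pos reducible_lincomb_j_k_pos
        reducible_lincomb_k_pos_j_zero reducible_lincomb_k_pos_j_neg reducible_lincomb_k_zero_j_pos
      by cases auto
  qed
  consider "0 < k \<or> k = 0 \<and> 0 < j \<or> k = 0 \<and> j = 0 \<and> 0 < i"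
    | "0 < - k \<or> - k = 0 \<and> 0 < - j \<or> - k = 0 \<and> - j = 0 \<and> 0 < - i"
  proof -
    have "\<not> (i = 0 \<and> j = 0 \<and> k = 0)"
      using assms(4) by auto
    then show thesis
      using that by linarith
  qed
  then show ?thesis
  proof cases
    case 1
    then show ?thesis
      by (rule lex_pos)
  next
    case 2
    then have "reducible (lincomb (- i) (- j) (- k))"
      by (rule lex_pos)
    then show ?thesis
      by (simp add: lincomb_uminus reducible_uminus)
  qed
qed

lemma not_reducible_not_a:
  assumes "c2 + c3 \<le> c1" "\<not> (d1 = 0 \<and> d2 = 0 \<and> d4 < d3)" "\<not> (d1 = 0 \<and> d3 = 0 \<and> d4 < d2)"
    and "0 \<le> z2" "z3 \<le> 0"
  shows "\<not> reducible (vec4 0 z2 z3 0)"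
  unfolding reducible_vec4_iff improves_vec4
  using assms b_pos c_pos d_pos by (auto simp: le_max_iff_disj abs_if)

lemma not_reducible_not_a_d1_d2_zero:
  assumes "c2 + c3 \<le> c1" "d1 = 0" "d2 = 0" "d4 < d3" "0 \<le> z2" "z4 \<le> - d4"
  shows "\<not> reducible (vec4 0 z2 0 z4)"
  unfolding reducible_vec4_iff improves_vec4
  using assms b_pos c_pos d_pos by (auto simp: le_max_iff_disj abs_if)

lemma not_reducible_not_a_d1_d3_zero:
  assumes "c2 + c3 \<le> c1" "d1 = 0" "d3 = 0" "d4 < d2" "0 \<le> z2" "z2 < d2" "0 \<le> z4"
  shows "\<not> reducible (vec4 0 z2 z3 z4)"
  unfolding reducible_vec4_iff improves_vec4
  using assms b_pos c_pos d_pos by (auto simp: le_max_iff_disj abs_if)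

lemma not_reducible_not_b:
  assumes "\<not> (c1 = 0 \<and> c3 < c2)" "d2 + d4 \<le> d1 + d3" "c2 \<le> z2" "d2 \<le> z2" "z4 \<le> - d4"
  shows "\<not> reducible (vec4 0 z2 0 z4)"
  unfolding reducible_vec4_iff improves_vec4
  using assms b_pos c_pos d_pos by (auto simp: le_max_iff_disj abs_if)

lemma not_reducible_not_c:
  assumes "c3 \<le> c1 + c2" "d3 + d4 \<le> d1 + d2" "c3 \<le> z3" "d3 \<le> z3" "z4 \<le> - d4"
  shows "\<not> reducible (vec4 0 0 z3 z4)"
  unfolding reducible_vec4_iff improves_vec4
  using assms b_pos c_pos d_pos by (auto simp: le_max_iff_disj abs_if)

lemma b2_mult_le: "0 \<le> y \<Longrightarrow> b2 * (x + y) \<le> x * b2 + b1 * y"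
  using b_pos mult_right_mono [of b2 b1 y] by (simp add: algebra_simps)

lemma c_b_pos: "0 < c1 * b2 + b1 * c2"
proof -
  have "0 < b2 * (c1 + c2)"
    using b_pos c_pos by simp
  then show ?thesis
    using b2_mult_le [of c2 c1] c_pos by linarith
qed

lemma d_c_b_pos: "0 < d3 * (c1 * b2 + b1 * c2) + c3 * (d1 * b2 + b1 * d2)"
proof -
  have "0 \<le> b2 * (d1 + d2)"
    using b_pos d_pos by simp
  then have d_b_nonneg: "0 \<le> d1 * b2 + b1 * d2"
    using b2_mult_le [of d2 d1] d_pos by linarith
  show ?thesis
  proof (cases "d3 = 0")
    case True
    then have "0 < b2 * (d1 + d2)"
      using b_pos d_pos by simp
    then have "0 < d1 * b2 + b1 * d2"
      using b2_mult_le [of d2 d1] d_pos by linarith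
    then show ?thesis
      using True c_pos by simp
  next
    case False
    then show ?thesis
      using d_b_nonneg c_b_pos c_pos d_pos by (simp add: add_pos_nonneg)
  qed
qed

lemma irreducible_lincomb_if_not_cond_a:
  assumes "c2 + c3 \<le> c1"
  shows "\<exists>i j k. lincomb i j k \<noteq> 0 \<and> \<not> reducible (lincomb i j k)"
proof -
  have "0 < b1 * c3" "0 < c1 * b2 + b1 * c2"
    using b_pos c_pos c_b_pos by simp_all
  consider "d1 = 0" "d2 = 0" "d4 < d3" | "d1 = 0" "d3 = 0" "d4 < d2"
    | "\<not> (d1 = 0 \<and> d2 = 0 \<and> d4 < d3)" "\<not> (d1 = 0 \<and> d3 = 0 \<and> d4 < d2)"
    by blast
  then show ?thesis
  proof cases
    case 1
    have z: "lincomb (- (d3 * c1)) (b1 * d3) (b1 * c3) =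
        vec4 0 (d3 * (c1 * b2 + b1 * c2)) 0 (- (b1 * c3 * d4))"
      unfolding lincomb_def using 1 by (simp add: algebra_simps)
    have "d4 \<le> b1 * c3 * d4"
      using \<open>0 < b1 * c3\<close> d_pos by (simp add: mult_le_cancel_right1)
    then have "lincomb (- (d3 * c1)) (b1 * d3) (b1 * c3) \<noteq> 0 \<and>
        \<not> reducible (lincomb (- (d3 * c1)) (b1 * d3) (b1 * c3))"
      unfolding z using \<open>0 < c1 * b2 + b1 * c2\<close> b_pos c_pos d_pos
      by (simp add: vec4_eq_zero_iff not_reducible_not_a_d1_d2_zero [OF assms 1])
    then show ?thesis
      by blast
  next
    case 2
    (* the move d = (0, d2, 0, -d4) reduces the second coordinate modulo d2 *)
    define m where "m = (c1 * b2 + b1 * c2) div d2"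
    have "lincomb (- c1) b1 (- m) = vec4 0 (c1 * b2 + b1 * c2 - m * d2) (- (b1 * c3)) (m * d4)"
      unfolding lincomb_def using 2 by (simp add: algebra_simps)
    also have "\<dots> = vec4 0 ((c1 * b2 + b1 * c2) mod d2) (- (b1 * c3)) (m * d4)"
      by (simp add: m_def minus_div_mult_eq_mod)
    finally have z: "lincomb (- c1) b1 (- m) = \<dots>" .
    have "0 < d2"
      using 2 d_pos by simp
    then have "\<not> reducible (vec4 0 ((c1 * b2 + b1 * c2) mod d2) (- (b1 * c3)) (m * d4))"
      using \<open>0 < c1 * b2 + b1 * c2\<close> d_pos
      by (intro not_reducible_not_a_d1_d3_zero [OF assms 2])
        (simp_all add: m_def pos_imp_zdiv_nonneg_iff)
    then have "lincomb (- c1) b1 (- m) \<noteq> 0 \<and> \<not> reducible (lincomb (- c1) b1 (- m))"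
      unfolding z using b_pos c_pos by (simp add: vec4_eq_zero_iff)
    then show ?thesis
      by blast
  next
    case 3
    have z: "lincomb (- c1) b1 0 = vec4 0 (c1 * b2 + b1 * c2) (- (b1 * c3)) 0"
      by (simp add: lincomb_def algebra_simps)
    have "lincomb (- c1) b1 0 \<noteq> 0 \<and> \<not> reducible (lincomb (- c1) b1 0)"
      unfolding z using \<open>0 < b1 * c3\<close> \<open>0 < c1 * b2 + b1 * c2\<close> b_pos c_pos
      by (simp add: vec4_eq_zero_iff not_reducible_not_a [OF assms 3])
    then show ?thesis
      by blast
  qed
qed

(* In the next two lemmas (i, j, k) is T times the lattice point with z1 = z3 = 0, resp.
   z1 = z2 = 0; the factor T makes its middle coordinate exceed c2 and d2, resp. c3 and d3. *)

lemma irreducible_lincomb_if_not_cond_b: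
  assumes "\<not> (c1 = 0 \<and> c3 < c2)" "d2 + d4 \<le> d1 + d3"
  shows "\<exists>i j k. lincomb i j k \<noteq> 0 \<and> \<not> reducible (lincomb i j k)"
proof -
  define T where "T = c2 + d2 + 1"
  define Z where "Z = d3 * (c1 * b2 + b1 * c2) + c3 * (d1 * b2 + b1 * d2)"
  define i where "i = - (T * (c1 * d3 + c3 * d1))"
  define j where "j = T * (b1 * d3)"
  define k where "k = T * (b1 * c3)"
  have z: "lincomb i j k = vec4 0 (T * Z) 0 (- (k * d4))"
    by (simp add: lincomb_def i_def j_def k_def Z_def algebra_simps)
  have "0 < T" "0 < Z" "0 < k"
    using c_pos d_pos b_pos d_c_b_pos by (simp_all add: T_def Z_def k_def)
  then have "T \<le> T * Z" "d4 \<le> k * d4"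
    using d_pos by (simp_all add: mult_le_cancel_left1 mult_le_cancel_right1)
  then have "c2 \<le> T * Z" "d2 \<le> T * Z" "- (k * d4) \<le> - d4"
    using c_pos d_pos T_def by linarith+
  then have "\<not> reducible (lincomb i j k)"
    unfolding z by (rule not_reducible_not_b [OF assms])
  moreover have "lincomb i j k \<noteq> 0"
    unfolding z using \<open>0 < k\<close> d_pos by (simp add: vec4_eq_zero_iff)
  ultimately show ?thesis
    by blast
qed

lemma irreducible_lincomb_if_not_cond_c:
  assumes "c3 \<le> c1 + c2" "d3 + d4 \<le> d1 + d2"
  shows "\<exists>i j k. lincomb i j k \<noteq> 0 \<and> \<not> reducible (lincomb i j k)"
proof -
  define T where "T = c3 + d3 + 1"
  define P where "P = c1 * b2 + b1 * c2"
  define Q where "Q = d1 * b2 + b1 * d2"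
  define i where "i = T * (P * d2 - Q * c2)"
  define j where "j = - (T * (Q * b2))"
  define k where "k = T * (P * b2)"
  have z: "lincomb i j k = vec4 0 0 (T * (b2 * (d3 * P + c3 * Q))) (- (k * d4))"
    by (simp add: lincomb_def i_def j_def k_def P_def Q_def algebra_simps)
  have "0 < T" "0 < b2 * (d3 * P + c3 * Q)" "0 < k"
    using c_pos d_pos b_pos d_c_b_pos c_b_pos by (simp_all add: T_def P_def Q_def k_def)
  then have "T \<le> T * (b2 * (d3 * P + c3 * Q))" "d4 \<le> k * d4"
    using d_pos by (simp_all add: mult_le_cancel_left1 mult_le_cancel_right1)
  then have "c3 \<le> T * (b2 * (d3 * P + c3 * Q))" "d3 \<le> T * (b2 * (d3 * P + c3 * Q))"
    "- (k * d4) \<le> - d4"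
    using c_pos d_pos T_def by linarith+
  then have "\<not> reducible (lincomb i j k)"
    unfolding z by (rule not_reducible_not_c [OF assms])
  moreover have "lincomb i j k \<noteq> 0"
    unfolding z using \<open>0 < k\<close> d_pos by (simp add: vec4_eq_zero_iff)
  ultimately show ?thesis
    by blast
qed

theorem reducible_lincomb_iff:
  "(\<forall>i j k. lincomb i j k \<noteq> 0 \<longrightarrow> reducible (lincomb i j k)) \<longleftrightarrow>
     c1 < c2 + c3 \<and> (c1 = 0 \<and> c3 < c2 \<or> d1 + d3 < d2 + d4) \<and> (c1 + c2 < c3 \<or> d1 + d2 < d3 + d4)"
  using reducible_lincomb irreducible_lincomb_if_not_cond_a irreducible_lincomb_if_not_cond_b
    irreducible_lincomb_if_not_cond_c
  by (meson not_le)

end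

lemma kerA_vec4_iff: "vec4 x1 x2 x3 x4 \<in> kerA a 4 \<longleftrightarrow> a 1 * x1 + a 2 * x2 + a 3 * x3 + a 4 * x4 = 0"
  unfolding kerA_def intvecs_def atLeastAtMost_1_4 by (simp add: vec4_def add.assoc)

lemma triangular_moves_if_kerA:
  assumes "\<forall>i\<in>{1..4}. 0 < a i"
    and "{vec4 b1 (- b2) 0 0, vec4 c1 c2 (- c3) 0, vec4 d1 d2 d3 (- d4)} \<subseteq> kerA a 4"
    and "0 < b2" "b2 < b1" "0 < c3" "0 \<le> c1" "0 \<le> c2" "0 < d4" "0 \<le> d1" "0 \<le> d2" "0 \<le> d3"
  shows "triangular_moves b1 b2 c1 c2 c3 d1 d2 d3 d4"
proof -
  have "a 1 * c1 + a 2 * c2 = a 3 * c3" "a 1 * d1 + a 2 * d2 + a 3 * d3 = a 4 * d4"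
    using assms(2) by (simp_all add: kerA_vec4_iff)
  moreover have "0 < a 3 * c3" "0 < a 4 * d4"
    using assms(1,5,8) by simp_all
  ultimately have "c1 \<noteq> 0 \<or> c2 \<noteq> 0" "d1 \<noteq> 0 \<or> d2 \<noteq> 0 \<or> d3 \<noteq> 0"
    by auto
  then show ?thesis
    using assms(3-) by unfold_locales linarith+
qed

theorem corollary6p2:
  fixes a :: "nat \<Rightarrow> int"
    and b1 b2 c1 c2 c3 d1 d2 d3 d4 :: int
    and M :: "(nat \<Rightarrow> int) set"
  assumes apos: "\<forall>i\<in>{1..4}. a i > 0"
    and glue: "gluing_first_kind a 4"
    and Mdef: "M = {vec4 b1 (- b2) 0 0, vec4 c1 c2 (- c3) 0, vec4 d1 d2 d3 (- d4)}"
    and pos: "b1 > 0" "b2 > 0" "c3 > 0" "d4 > 0"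
    and nonneg: "c1 \<ge> 0" "c2 \<ge> 0" "d1 \<ge> 0" "d2 \<ge> 0" "d3 \<ge> 0"
    and minM: "minimal_markov_basis TYPE('k::field) a 4 M"
    and b12: "b1 > b2"
  shows "distance_reducing a 4 M \<longleftrightarrow>
           c1 < c2 + c3 \<and>
           ((c1 = 0 \<and> c3 < c2) \<or> d1 + d3 < d2 + d4) \<and>
           (c1 + c2 < c3 \<or> d1 + d2 < d3 + d4)"
proof -
  (* The gluing only serves to give M the shape in Mdef; of minimality only the Markov
     property is used. *)
  have basis: "markov_basis TYPE('k) a 4 M"
    using minM by (simp add: minimal_markov_basis_def)
  then interpret triangular_moves b1 b2 c1 c2 c3 d1 d2 d3 d4
    using apos Mdef pos nonneg b12 by (intro triangular_moves_if_kerA) (auto simp: markov_basis_def)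
  have M: "M = moves"
    by (simp add: Mdef moves_def)
  have kernel: "kerA a 4 = {lincomb i j k | i j k. True}"
    using markov_basis_kerA_eq [OF basis] by (simp add: M group_closure_moves)
  have "distance_reducing a 4 M \<longleftrightarrow> (\<forall>i j k. lincomb i j k \<noteq> 0 \<longrightarrow> reducible (lincomb i j k))"
    unfolding distance_reducing_def reducible_def M zero_fun_def kernel by blast
  then show ?thesis
    by (simp add: reducible_lincomb_iff)
qed

end
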